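(* Let $P$ be a finite poset and $I\subseteq k[x_P]$ a monomial ideal. Then there is a poset filter $\mathcal{F}\subseteq\mathrm{Hom}(P,\mathbb{N})$ such that the set of monomials of $I$ equals $\{\overline{\Lambda}\phi:\phi\in\mathcal{F}\}$ if and only if $I$ is $P$-stable.
   Context: $\mathbb{N}=\{0,1,\dots\}$; $\mathrm{Hom}(P,\mathbb{N})$ is the set of isotone maps $P\to\mathbb{N}$ ordered pointwise. The ascent of $\phi$ is $\Lambda\phi=\{(p,i)\in P\times\mathbb{N}:\phi(q)\le i<\phi(p)\ \forall q<p\}$, and $\overline{\Lambda}\phi=\prod_{(p,i)\in\Lambda\phi}x_p\in k[x_P]$ ($k$ a field, $k[x_P]$ the polynomial ring in variables $x_p$, $p\in P$). For $b\in P$, a $b$-chain is a multichain $C: p_1\le\dots\le p_r$ in $P$ with $p_r\le b$; its length is $r$ and $m_C=\prod_{i=1}^r x_{p_i}$. $C$ is in a monomial $m$ if $m_C$ divides $m$; it is a longest $b$-chain in $m$ if no $b$-chain in $m$ is longer. $C$ goes through $a$ if $a\le b$ and $a$ is comparable to every $p_i$ (so $a$ can be inserted to give a longer multichain). For an antichain $B$, $m_B=\prod_{b\in B}x_b$. A monomial ideal $I\subseteq k[x_P]$ is $P$-stable if: whenever $m=n\,m_B\in I$ with $n$ a monomial and $B$ an antichain, and $a\in P$ is such that for every $b\in B$ some longest $b$-chain in $m$ goes through $a$, then $n\,x_a\in I$. *)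

theory Defs
  imports Main "HOL-Library.Multiset" "HOL-Library.Poly_Mapping"
begin

(* Monomials in the
variables x_p (p in P) are multisets over P (the free commutative monoid on P);
k[x_P] is the monoid algebra ('p multiset =>0 'k). *)

type_synonym ('p, 'k) mpoly = "'p multiset \<Rightarrow>\<^sub>0 'k"

definition mon :: "'p multiset \<Rightarrow> ('p, 'k::field) mpoly" where
  "mon m = Poly_Mapping.single m 1"

definition var :: "'p \<Rightarrow> ('p, 'k::field) mpoly" where
  "var p = mon {#p#}"

definition is_ideal :: "'r::comm_ring_1 set \<Rightarrow> bool" where
  "is_ideal I \<longleftrightarrow> 0 \<in> I \<and> (\<forall>a\<in>I. \<forall>b\<in>I. a + b \<in> I) \<and> (\<forall>a\<in>I. \<forall>r. r * a \<in> I)"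

definition ideal_gen :: "'r::comm_ring_1 set \<Rightarrow> 'r set" where
  "ideal_gen S = \<Inter>{J. is_ideal J \<and> S \<subseteq> J}"

definition monomial_ideal :: "('p, 'k::field) mpoly set \<Rightarrow> bool" where
  "monomial_ideal I \<longleftrightarrow> is_ideal I \<and> I = ideal_gen (I \<inter> range mon)"

definition Hom :: "('p::order \<Rightarrow> nat) set" where
  "Hom = {\<phi>. mono \<phi>}"

definition hom_filter :: "('p::order \<Rightarrow> nat) set \<Rightarrow> bool" where
  "hom_filter F \<longleftrightarrow> F \<subseteq> Hom \<and> (\<forall>\<phi>\<in>F. \<forall>\<psi>\<in>Hom. \<phi> \<le> \<psi> \<longrightarrow> \<psi> \<in> F)"

definition ascent :: "('p::order \<Rightarrow> nat) \<Rightarrow> ('p \<times> nat) set" where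
  "ascent \<phi> = {(p, i). (\<forall>q. q < p \<longrightarrow> \<phi> q \<le> i) \<and> i < \<phi> p}"

definition ascent_poly :: "('p::order \<Rightarrow> nat) \<Rightarrow> ('p, 'k::field) mpoly" where
  "ascent_poly \<phi> = (\<Prod>(p, i)\<in>ascent \<phi>. var p)"

(* b-chains (multichains p_1 \<le> ... \<le> p_r with p_r \<le> b), as lists;
m_C = mset C, and "C is in m" means m_C divides m, i.e. mset C \<subseteq># m. *)
definition b_chain :: "'p::order \<Rightarrow> 'p list \<Rightarrow> bool" where
  "b_chain b C \<longleftrightarrow> sorted_wrt (\<le>) C \<and> (C \<noteq> [] \<longrightarrow> last C \<le> b)"

definition chain_in :: "'p list \<Rightarrow> 'p multiset \<Rightarrow> bool" where
  "chain_in C m \<longleftrightarrow> mset C \<subseteq># m"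

definition longest_b_chain :: "'p::order \<Rightarrow> 'p multiset \<Rightarrow> 'p list \<Rightarrow> bool" where
  "longest_b_chain b m C \<longleftrightarrow> b_chain b C \<and> chain_in C m \<and>
     (\<forall>C'. b_chain b C' \<and> chain_in C' m \<longrightarrow> length C' \<le> length C)"

definition goes_through :: "'p::order \<Rightarrow> 'p \<Rightarrow> 'p list \<Rightarrow> bool" where
  "goes_through a b C \<longleftrightarrow> a \<le> b \<and> (\<forall>p\<in>set C. a \<le> p \<or> p \<le> a)"

definition antichain_set :: "'p::order set \<Rightarrow> bool" where
  "antichain_set B \<longleftrightarrow> (\<forall>x\<in>B. \<forall>y\<in>B. x \<le> y \<longrightarrow> x = y)"

definition P_stable :: "('p::{finite,order}, 'k::field) mpoly set \<Rightarrow> bool" where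
  "P_stable I \<longleftrightarrow> (\<forall>m n B a. mon m \<in> I \<and> m = n + mset_set B \<and> antichain_set B \<and>
      (\<forall>b\<in>B. \<exists>C. longest_b_chain b m C \<and> goes_through a b C)
      \<longrightarrow> mon (n + {#a#}) \<in> I)"

end

theory Submission
  imports Defs
begin

text \<open>The ascent monomial is a bijection from \<open>Hom(P,\<nat>)\<close> onto the monomials; its inverse
  sends \<open>m\<close> to \<open>p \<mapsto>\<close> the length of a longest \<open>p\<close>-chain in \<open>m\<close>. So the left-hand side says
  that the monomials of \<open>I\<close> are closed upwards for the pointwise order of these chain-length
  functions. A single stability move \<open>n m\<^sub>B \<mapsto> n x\<^sub>a\<close> never shortens a longest chain, so such
  an up-closed set is stable. Conversely, every \<open>\<psi> \<ge> \<phi>\<close> in \<open>Hom(P,\<nat>)\<close> is reached from \<open>\<phi>\<close> by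
  raising one value at a time, and each raise is a stability move.\<close>


lemma mon_mult: "(mon a :: ('p, 'k::field) mpoly) * mon b = mon (a + b)"
  by (simp add: mon_def mult_single)

lemma mon_empty: "(mon {#} :: ('p, 'k::field) mpoly) = 1"
  by (simp add: mon_def)

lemma mon_inject: "(mon a :: ('p, 'k::field) mpoly) = mon b \<longleftrightarrow> a = b"
  unfolding mon_def by (metis lookup_single_eq lookup_single_not_eq zero_neq_one)

lemma var_power: "(var p :: ('p, 'k::field) mpoly) ^ k = mon (replicate_mset k p)"
  by (induct k) (auto simp: var_def mon_empty mon_mult add.commute)

lemma prod_mon: "finite A \<Longrightarrow> (\<Prod>x\<in>A. (mon (f x) :: ('p, 'k::field) mpoly)) = mon (\<Sum>x\<in>A. f x)"
  by (induct A rule: finite_induct) (auto simp: mon_empty mon_mult)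

subsection \<open>The ascent multiset\<close>

definition max_below :: "('p::{finite,order} \<Rightarrow> nat) \<Rightarrow> 'p \<Rightarrow> nat" where
  "max_below \<phi> p = Max (insert 0 (\<phi> ` {q. q < p}))"

lemma le_max_below: "q < p \<Longrightarrow> \<phi> q \<le> max_below \<phi> p"
  unfolding max_below_def by (rule Max_ge) auto

lemma max_below_le_iff: "max_below \<phi> p \<le> i \<longleftrightarrow> (\<forall>q. q < p \<longrightarrow> \<phi> q \<le> i)"
  unfolding max_below_def by (subst Max_le_iff) auto

lemma max_below_cases: "max_below \<phi> p = 0 \<or> (\<exists>q<p. max_below \<phi> p = \<phi> q)"
proof -
  have "max_below \<phi> p \<in> insert 0 (\<phi> ` {q. q < p})"
    unfolding max_below_def by (rule Max_in) auto
  then show ?thesis by auto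
qed

lemma max_below_le: "mono \<phi> \<Longrightarrow> max_below \<phi> p \<le> \<phi> p"
  by (auto simp: max_below_le_iff mono_def)

lemma max_below_raise:
  "max_below (\<phi>(a := Suc (\<phi> a))) x =
     (if a < x \<and> max_below \<phi> x = \<phi> a then Suc (\<phi> a) else max_below \<phi> x)"
proof (cases "a < x")
  case False
  then have "(\<phi>(a := Suc (\<phi> a))) ` {q. q < x} = \<phi> ` {q. q < x}" by auto
  with False show ?thesis by (simp add: max_below_def)
next
  case ax: True
  show ?thesis
  proof (cases "max_below \<phi> x = \<phi> a")
    case True
    have "max_below (\<phi>(a := Suc (\<phi> a))) x \<le> Suc (\<phi> a)"
      using True le_max_below[of _ x \<phi>] by (auto simp: max_below_le_iff le_SucI)
    moreover have "Suc (\<phi> a) \<le> max_below (\<phi>(a := Suc (\<phi> a))) x"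
      using le_max_below[OF ax, of "\<phi>(a := Suc (\<phi> a))"] by simp
    ultimately show ?thesis using ax True by simp
  next
    case False
    then have gt: "\<phi> a < max_below \<phi> x"
      using le_max_below[OF ax, of \<phi>] by simp
    then obtain q where q: "q < x" "max_below \<phi> x = \<phi> q"
      using max_below_cases[of \<phi> x] by auto
    have "max_below (\<phi>(a := Suc (\<phi> a))) x \<le> max_below \<phi> x"
      using gt le_max_below[of _ x \<phi>] by (auto simp: max_below_le_iff)
    moreover have "q \<noteq> a" using q gt by auto
    then have "max_below \<phi> x \<le> max_below (\<phi>(a := Suc (\<phi> a))) x"
      using le_max_below[OF q(1), of "\<phi>(a := Suc (\<phi> a))"] q(2) by simp
    ultimately show ?thesis using False by simp
  qed
qed

lemma mono_raise_less: "mono (\<phi>(a := Suc (\<phi> a))) \<Longrightarrow> a < b \<Longrightarrow> \<phi> a < \<phi> b"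
  using monoD[of "\<phi>(a := Suc (\<phi> a))" a b] by (simp add: less_imp_le less_imp_neq[symmetric])

definition ascent_mset :: "('p::{finite,order} \<Rightarrow> nat) \<Rightarrow> 'p multiset" where
  "ascent_mset \<phi> = (\<Sum>p\<in>UNIV. replicate_mset (\<phi> p - max_below \<phi> p) p)"

lemma count_ascent_mset: "count (ascent_mset \<phi>) x = \<phi> x - max_below \<phi> x"
proof -
  have "count (ascent_mset \<phi>) x = (\<Sum>p\<in>UNIV. count (replicate_mset (\<phi> p - max_below \<phi> p) p) x)"
    by (simp add: ascent_mset_def count_sum)
  also have "\<dots> = (\<Sum>p\<in>UNIV. if p = x then \<phi> x - max_below \<phi> x else 0)"
    by (rule sum.cong) auto
  finally show ?thesis by simp
qed

lemma ascent_eq_Sigma: "ascent \<phi> = Sigma UNIV (\<lambda>p. {max_below \<phi> p..<\<phi> p})"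
  by (auto simp: ascent_def max_below_le_iff)

lemma ascent_poly_eq_mon:
  "(ascent_poly \<phi> :: ('p::{finite,order}, 'k::field) mpoly) = mon (ascent_mset \<phi>)"
proof -
  have "(ascent_poly \<phi> :: ('p, 'k) mpoly) = (\<Prod>p\<in>UNIV. \<Prod>i\<in>{max_below \<phi> p..<\<phi> p}. var p)"
    unfolding ascent_poly_def ascent_eq_Sigma by (subst prod.Sigma) auto
  also have "\<dots> = (\<Prod>p\<in>UNIV. mon (replicate_mset (\<phi> p - max_below \<phi> p) p))"
    by (simp add: var_power)
  also have "\<dots> = mon (ascent_mset \<phi>)" by (simp add: prod_mon ascent_mset_def)
  finally show ?thesis .
qed

lemma ascent_mset_raise:
  assumes "mono \<phi>" and "mono (\<phi>(a := Suc (\<phi> a)))"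
  shows "ascent_mset (\<phi>(a := Suc (\<phi> a))) =
           ascent_mset \<phi> - mset_set {b. a < b \<and> max_below \<phi> b = \<phi> a} + {#a#}"
proof (rule multiset_eqI)
  fix x
  have "max_below \<phi> a \<le> \<phi> a" using max_below_le[OF assms(1)] .
  moreover have "a < x \<Longrightarrow> Suc (\<phi> a) \<le> \<phi> x"
    using mono_raise_less[OF assms(2)] by (simp add: Suc_le_eq)
  ultimately show "count (ascent_mset (\<phi>(a := Suc (\<phi> a)))) x =
      count (ascent_mset \<phi> - mset_set {b. a < b \<and> max_below \<phi> b = \<phi> a} + {#a#}) x"
    by (auto simp: count_ascent_mset max_below_raise Suc_diff_le)
qed

subsection \<open>Longest chains\<close>

lemma sorted_wrt_le_last: "sorted_wrt (\<le>) C \<Longrightarrow> x \<in> set C \<Longrightarrow> x \<le> (last C :: 'a::order)"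
proof (induct C)
  case (Cons y ys) then show ?case by (cases ys) (auto intro: order_trans)
qed simp

lemma b_chain_iff: "b_chain b C \<longleftrightarrow> sorted_wrt (\<le>) C \<and> (\<forall>x\<in>set C. x \<le> b)"
  unfolding b_chain_def
  by (metis last_in_set order_trans sorted_wrt_le_last empty_iff list.set(1))

lemma sorted_wrt_replicate: "sorted_wrt (\<le>) (replicate k (p::'a::order))"
  by (induct k) auto

lemma sorted_wrt_comparable:
  "sorted_wrt (\<le>) C \<Longrightarrow> x \<in> set C \<Longrightarrow> y \<in> set C \<Longrightarrow> x \<le> y \<or> y \<le> (x::'a::order)"
  by (induct C) auto

lemma exists_sorted_list_of_chain:
  fixes M :: "'a::order multiset"
  assumes "\<forall>x\<in>#M. \<forall>y\<in>#M. x \<le> y \<or> y \<le> x"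
  shows "\<exists>xs. mset xs = M \<and> sorted_wrt (\<le>) xs"
  using assms
proof (induct M)
  case (add x M)
  then obtain ys where ys: "mset ys = M" "sorted_wrt (\<le>) ys" by auto
  have "\<forall>y\<in>set ys. x \<le> y \<or> y \<le> x" using add(2) ys(1) by auto
  then have "sorted_wrt (\<le>) (filter (\<lambda>y. \<not> x \<le> y) ys @ x # filter (\<lambda>y. x \<le> y) ys)"
    using ys(2) by (auto simp: sorted_wrt_append sorted_wrt_filter intro: order_trans)
  moreover have "mset (filter (\<lambda>y. \<not> x \<le> y) ys @ x # filter (\<lambda>y. x \<le> y) ys) = add_mset x M"
    using ys(1) by (simp add: add.commute)
  ultimately show ?case by blast
qed simp

lemma chain_in_iff_count: "chain_in C m \<longleftrightarrow> (\<forall>x. count (mset C) x \<le> count m x)"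
  by (simp add: chain_in_def subseteq_mset_def)

lemma chain_in_filter: "chain_in C m \<Longrightarrow> chain_in (filter P C) m"
  unfolding chain_in_def by (metis mset_filter multiset_filter_subset subset_mset.order_trans)

lemma append_top_chain:
  assumes "sorted_wrt (\<le>) C" "\<forall>x\<in>set C. x < p" "chain_in C m"
  shows "b_chain p (C @ replicate (count m p) p)" "chain_in (C @ replicate (count m p) p) m"
proof -
  show "b_chain p (C @ replicate (count m p) p)"
    using assms(1,2) by (auto simp: b_chain_iff sorted_wrt_append sorted_wrt_replicate less_imp_le)
  have "count (mset C) p = 0" using assms(2) by (auto simp: count_mset_0_iff)
  then show "chain_in (C @ replicate (count m p) p) m"
    using assms(3) by (auto simp: chain_in_iff_count)
qed

definition longest_chain_len :: "'p::{finite,order} multiset \<Rightarrow> 'p \<Rightarrow> nat" where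
  "longest_chain_len m p = Max {length C | C. b_chain p C \<and> chain_in C m}"

lemma finite_chain_lengths: "finite {length C | C. b_chain p C \<and> chain_in C m}"
proof (rule finite_subset)
  show "{length C | C. b_chain p C \<and> chain_in C m} \<subseteq> {..size m}"
    by (auto simp: chain_in_def dest!: size_mset_mono)
qed simp

lemma le_longest_chain_len: "b_chain p C \<Longrightarrow> chain_in C m \<Longrightarrow> length C \<le> longest_chain_len m p"
  unfolding longest_chain_len_def by (rule Max_ge[OF finite_chain_lengths]) auto

lemma longest_chain_exists: "\<exists>C. b_chain p C \<and> chain_in C m \<and> length C = longest_chain_len m p"
proof -
  have "b_chain p [] \<and> chain_in [] m" by (simp add: b_chain_def chain_in_def)
  then have "longest_chain_len m p \<in> {length C | C. b_chain p C \<and> chain_in C m}"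
    unfolding longest_chain_len_def by (intro Max_in[OF finite_chain_lengths]) blast
  then show ?thesis by auto
qed

lemma longest_b_chain_iff:
  "longest_b_chain b m C \<longleftrightarrow> b_chain b C \<and> chain_in C m \<and> length C = longest_chain_len m b"
  by (metis longest_b_chain_def le_antisym le_longest_chain_len longest_chain_exists)

lemma mono_longest_chain_len:
  fixes m :: "'p::{finite,order} multiset"
  shows "mono (longest_chain_len m)"
proof
  fix p p' :: 'p assume "p \<le> p'"
  obtain C where C: "b_chain p C" "chain_in C m" "length C = longest_chain_len m p"
    using longest_chain_exists by blast
  then have "b_chain p' C" using \<open>p \<le> p'\<close> by (auto simp: b_chain_iff intro: order_trans)
  with C show "longest_chain_len m p \<le> longest_chain_len m p'"
    by (metis le_longest_chain_len)
qed

text \<open>A longest \<open>p\<close>-chain consists of all copies of \<open>p\<close> in \<open>m\<close> on top of a longest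
  chain strictly below \<open>p\<close>.\<close>

lemma longest_chain_len_rec:
  "longest_chain_len m p = count m p + max_below (longest_chain_len m) p"
proof (rule antisym)
  obtain C where C: "b_chain p C" "chain_in C m" "length C = longest_chain_len m p"
    using longest_chain_exists by blast
  define C1 where "C1 = filter (\<lambda>x. x \<noteq> p) C"
  have "count (mset C) p = length (filter (\<lambda>x. x = p) C)" by (induct C) auto
  then have "length C = length C1 + count (mset C) p"
    unfolding C1_def using sum_length_filter_compl[of "\<lambda>x. x = p" C] by simp
  moreover have "count (mset C) p \<le> count m p" using C(2) by (simp add: chain_in_iff_count)
  moreover have "length C1 \<le> max_below (longest_chain_len m) p"
  proof (cases "C1 = []")
    case False
    have "last C1 < p" using C(1) False last_in_set[OF False] by (auto simp: C1_def b_chain_iff)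
    moreover have "b_chain (last C1) C1"
      using C(1) False by (simp add: b_chain_def C1_def sorted_wrt_filter b_chain_iff)
    moreover have "chain_in C1 m" using C(2) unfolding C1_def by (rule chain_in_filter)
    ultimately show ?thesis
      by (meson le_longest_chain_len le_max_below order_trans)
  qed simp
  ultimately show "longest_chain_len m p \<le> count m p + max_below (longest_chain_len m) p"
    using C(3) by linarith
next
  obtain C where C: "sorted_wrt (\<le>) C" "\<forall>x\<in>set C. x < p" "chain_in C m"
    "length C = max_below (longest_chain_len m) p"
  proof (cases "max_below (longest_chain_len m) p = 0")
    case True
    then show ?thesis using that[of "[]"] by (simp add: chain_in_def)
  next
    case False
    then obtain q where q: "q < p" "max_below (longest_chain_len m) p = longest_chain_len m q"
      using max_below_cases[of "longest_chain_len m" p] by auto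
    obtain C where "b_chain q C" "chain_in C m" "length C = longest_chain_len m q"
      using longest_chain_exists by blast
    then show ?thesis using that[of C] q
      by (auto simp: b_chain_iff intro: order_le_less_trans)
  qed
  then have "length (C @ replicate (count m p) p) \<le> longest_chain_len m p"
    using append_top_chain le_longest_chain_len by blast
  then show "count m p + max_below (longest_chain_len m) p \<le> longest_chain_len m p"
    using C(4) by simp
qed

lemma ascent_mset_longest_chain_len: "ascent_mset (longest_chain_len m) = m"
  by (rule multiset_eqI) (simp add: count_ascent_mset longest_chain_len_rec[of m])

lemma longest_chain_len_ascent_mset:
  assumes "mono \<phi>"
  shows "longest_chain_len (ascent_mset \<phi>) = \<phi>"
proof
  fix p
  show "longest_chain_len (ascent_mset \<phi>) p = \<phi> p"
  proof (induct p rule: measure_induct_rule[of "\<lambda>p. card {q. q < p}"])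
    case (less p)
    have "\<And>q. q < p \<Longrightarrow> longest_chain_len (ascent_mset \<phi>) q = \<phi> q"
      by (rule less) (auto intro!: psubset_card_mono dest: order.strict_trans)
    then have "max_below (longest_chain_len (ascent_mset \<phi>)) p = max_below \<phi> p"
      unfolding max_below_def by (metis (mono_tags, lifting) image_cong mem_Collect_eq)
    then show ?case
      using longest_chain_len_rec[of "ascent_mset \<phi>" p] max_below_le[OF assms, of p]
      by (simp add: count_ascent_mset)
  qed
qed

subsection \<open>Filters of \<open>Hom(P,\<nat>)\<close> as up-closed sets of monomials\<close>

definition chain_len_upclosed :: "('p::{finite,order}, 'k::field) mpoly set \<Rightarrow> bool" where
  "chain_len_upclosed I \<longleftrightarrow>
     (\<forall>m m'. mon m \<in> I \<and> longest_chain_len m \<le> longest_chain_len m' \<longrightarrow> mon m' \<in> I)"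

lemma ascent_filter_iff_chain_len_upclosed:
  fixes I :: "('p::{finite,order}, 'k::field) mpoly set"
  shows "(\<exists>F. hom_filter F \<and> {f \<in> I. f \<in> range mon} = ascent_poly ` F) \<longleftrightarrow>
    chain_len_upclosed I"
proof
  assume "\<exists>F. hom_filter F \<and> {f \<in> I. f \<in> range mon} = ascent_poly ` F"
  then obtain F where F: "hom_filter F" "{f \<in> I. f \<in> range mon} = ascent_poly ` F" by blast
  show "chain_len_upclosed I" unfolding chain_len_upclosed_def
  proof (intro allI impI, elim conjE)
    fix m m' assume m: "mon m \<in> I" and le: "longest_chain_len m \<le> longest_chain_len m'"
    then obtain \<phi> where \<phi>: "\<phi> \<in> F" "(mon m :: ('p, 'k) mpoly) = ascent_poly \<phi>"
      using F(2) by blast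
    have "mono \<phi>" using F(1) \<phi>(1) by (auto simp: hom_filter_def Hom_def)
    then have "\<phi> = longest_chain_len m"
      using \<phi>(2) by (simp add: ascent_poly_eq_mon mon_inject longest_chain_len_ascent_mset)
    then have "longest_chain_len m' \<in> F"
      using F(1) \<phi>(1) le mono_longest_chain_len by (auto simp: hom_filter_def Hom_def)
    then show "mon m' \<in> I"
      using F(2) by (force simp: ascent_poly_eq_mon ascent_mset_longest_chain_len)
  qed
next
  assume up: "chain_len_upclosed I"
  define F where "F = {\<phi> \<in> Hom. (mon (ascent_mset \<phi>) :: ('p, 'k) mpoly) \<in> I}"
  have "hom_filter F"
    using up unfolding hom_filter_def F_def Hom_def chain_len_upclosed_def
    by (metis (mono_tags, lifting) longest_chain_len_ascent_mset mem_Collect_eq subsetI)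
  moreover have "{f \<in> I. f \<in> range mon} = ascent_poly ` F"
  proof
    show "{f \<in> I. f \<in> range mon} \<subseteq> ascent_poly ` F"
    proof
      fix f assume "f \<in> {f \<in> I. f \<in> range mon}"
      then obtain m where m: "f = mon m" "mon m \<in> I" by auto
      then have "longest_chain_len m \<in> F"
        using mono_longest_chain_len by (simp add: F_def Hom_def ascent_mset_longest_chain_len)
      moreover have "f = ascent_poly (longest_chain_len m)"
        by (simp add: ascent_poly_eq_mon ascent_mset_longest_chain_len m)
      ultimately show "f \<in> ascent_poly ` F" by blast
    qed
    show "ascent_poly ` F \<subseteq> {f \<in> I. f \<in> range mon}"
      by (auto simp: F_def ascent_poly_eq_mon)
  qed
  ultimately show "\<exists>F. hom_filter F \<and> {f \<in> I. f \<in> range mon} = ascent_poly ` F" by blast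
qed

subsection \<open>Up-closed sets are \<open>P\<close>-stable\<close>

lemma exchange_mset_subset:
  fixes m :: "'p::{finite,order} multiset"
  assumes m: "m = n + mset_set B" and B: "antichain_set B" "b \<in> B"
    and C: "chain_in C m" and D: "chain_in D m" "\<forall>x\<in>set D. x \<le> b"
  shows "mset D - {#b#} + mset (filter (\<lambda>x. b < x) C) \<subseteq># n"
  unfolding subseteq_mset_def
proof
  fix x
  have count_m: "count m x = count n x + (if x \<in> B then 1 else 0)" using m by simp
  show "count (mset D - {#b#} + mset (filter (\<lambda>x. b < x) C)) x \<le> count n x"
  proof (cases "b < x")
    case True
    then have "x \<notin> B" using B by (auto simp: antichain_set_def less_le)
    moreover have "count (mset D) x = 0" using True D(2) by (auto simp: less_le_not_le)
    moreover have "count (mset C) x \<le> count m x" using C by (simp add: chain_in_iff_count)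
    ultimately show ?thesis using True count_m by (simp del: count_mset_0_iff)
  next
    case False
    have "count (mset D - {#b#}) x \<le> count n x"
    proof (cases "x \<in> set D")
      case True
      then have "x \<in> B \<Longrightarrow> x = b" using B D(2) by (auto simp: antichain_set_def)
      moreover have "count (mset D) x \<le> count m x" using D(1) by (simp add: chain_in_iff_count)
      ultimately show ?thesis using count_m by (auto split: if_splits)
    next
      case False
      then have "count (mset D) x = 0" by simp
      then show ?thesis by (simp del: count_mset_0_iff)
    qed
    with False show ?thesis by simp
  qed
qed

text \<open>Exchange argument: the part of a chain \<open>C\<close> in \<open>m\<close> lying weakly below \<open>b\<close> is at most
  as long as \<open>D\<close>, and replacing it by \<open>D\<close> with one copy of \<open>b\<close> traded for \<open>a\<close> yields a chain in
  \<open>n + a\<close> that is no shorter.\<close>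

lemma exchange_below_b_chain:
  fixes m :: "'p::{finite,order} multiset"
  assumes m: "m = n + mset_set B" and B: "antichain_set B" "b \<in> B"
    and C: "b_chain p C" "chain_in C m" "b \<in> set C"
    and D: "longest_b_chain b m D" "goes_through a b D"
  shows "\<exists>E. b_chain p E \<and> chain_in E (n + {#a#}) \<and> length C \<le> length E"
proof -
  have C_sorted: "sorted_wrt (\<le>) C" and C_le: "\<forall>x\<in>set C. x \<le> p"
    using C(1) by (auto simp: b_chain_iff)
  have D_sorted: "sorted_wrt (\<le>) D" and D_le: "\<forall>x\<in>set D. x \<le> b" and "chain_in D m"
    and D_longest: "\<And>C'. b_chain b C' \<Longrightarrow> chain_in C' m \<Longrightarrow> length C' \<le> length D"
    using D(1) by (auto simp: longest_b_chain_def b_chain_iff)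
  have ab: "a \<le> b" and D_comp: "\<forall>x\<in>set D. a \<le> x \<or> x \<le> a"
    using D(2) by (auto simp: goes_through_def)
  define M where "M = mset D - {#b#} + {#a#}"
  have M_set: "\<forall>x\<in>#M. x = a \<or> x \<in> set D" unfolding M_def by (auto dest: in_diffD)
  then have "\<forall>x\<in>#M. \<forall>y\<in>#M. x \<le> y \<or> y \<le> x"
    using D_comp sorted_wrt_comparable[OF D_sorted] by (metis order.refl)
  then obtain E1 where E1: "mset E1 = M" "sorted_wrt (\<le>) E1"
    using exists_sorted_list_of_chain by blast
  have E1_le: "\<forall>x\<in>set E1. x \<le> b"
    using M_set E1(1) D_le ab by (metis set_mset_mset)
  define C1 where "C1 = filter (\<lambda>x. \<not> b < x) C"
  define C2 where "C2 = filter (\<lambda>x. b < x) C"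
  have "b_chain b C1"
    using C_sorted sorted_wrt_comparable[OF C_sorted _ C(3)] unfolding C1_def b_chain_iff
    by (auto simp: sorted_wrt_filter le_less)
  moreover have "chain_in C1 m" using C(2) unfolding C1_def by (rule chain_in_filter)
  ultimately have "length C1 \<le> length D" by (rule D_longest)
  moreover have "length D \<le> size M"
    by (cases D) (simp_all add: M_def size_Diff_singleton_if)
  moreover have "length C = length C2 + length C1"
    unfolding C1_def C2_def by (rule sum_length_filter_compl[symmetric])
  ultimately have "length C \<le> length (E1 @ C2)" using E1(1) by (simp flip: size_mset)
  moreover have "b_chain p (E1 @ C2)"
    using E1(2) C_sorted E1_le C_le C(3) by (auto simp: b_chain_iff C2_def sorted_wrt_append
        sorted_wrt_filter intro: order_trans less_imp_le)
  moreover have "chain_in (E1 @ C2) (n + {#a#})"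
    using exchange_mset_subset[OF m B C(2) \<open>chain_in D m\<close> D_le]
    by (simp add: chain_in_def E1(1) M_def C2_def ac_simps)
  ultimately show ?thesis by blast
qed

lemma longest_chain_len_exchange:
  fixes m :: "'p::{finite,order} multiset"
  assumes m: "m = n + mset_set B" and B: "antichain_set B"
    and through: "\<forall>b\<in>B. \<exists>D. longest_b_chain b m D \<and> goes_through a b D"
  shows "longest_chain_len m \<le> longest_chain_len (n + {#a#})"
proof (rule le_funI)
  fix p
  obtain C where C: "b_chain p C" "chain_in C m" "length C = longest_chain_len m p"
    using longest_chain_exists by blast
  have "\<exists>E. b_chain p E \<and> chain_in E (n + {#a#}) \<and> length C \<le> length E"
  proof (cases "chain_in C n")
    case True
    then have "chain_in C (n + {#a#})"
      by (auto simp: chain_in_def intro: subset_mset.order_trans)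
    with C(1) show ?thesis by blast
  next
    case False
    then obtain b where b: "count n b < count (mset C) b"
      by (auto simp: chain_in_iff_count not_le)
    moreover have "count (mset C) b \<le> count m b" using C(2) by (simp add: chain_in_iff_count)
    moreover have "count m b = count n b + (if b \<in> B then 1 else 0)" using m by simp
    ultimately have "b \<in> B" "b \<in> set C"
      by (auto split: if_splits) (metis count_mset_0_iff not_less0)
    with through obtain D where "longest_b_chain b m D" "goes_through a b D" by blast
    with exchange_below_b_chain[OF m B \<open>b \<in> B\<close> C(1,2) \<open>b \<in> set C\<close>] show ?thesis by blast
  qed
  then show "longest_chain_len m p \<le> longest_chain_len (n + {#a#}) p"
    using C(3) le_longest_chain_len by fastforce
qed

lemma chain_len_upclosed_imp_P_stable: "chain_len_upclosed I \<Longrightarrow> P_stable I"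
  unfolding P_stable_def chain_len_upclosed_def using longest_chain_len_exchange by blast

subsection \<open>\<open>P\<close>-stable sets are up-closed\<close>

lemma longest_b_chain_through:
  assumes mono: "mono \<phi>" and ab: "a < b" and max_b: "max_below \<phi> b = \<phi> a"
  shows "\<exists>C. longest_b_chain b (ascent_mset \<phi>) C \<and> goes_through a b C"
proof -
  let ?m = "ascent_mset \<phi>"
  have len_m: "longest_chain_len ?m = \<phi>" using longest_chain_len_ascent_mset[OF mono] .
  obtain Ca where Ca: "b_chain a Ca" "chain_in Ca ?m" "length Ca = \<phi> a"
    using longest_chain_exists[of a ?m] len_m by auto
  let ?C = "Ca @ replicate (count ?m b) b"
  have "sorted_wrt (\<le>) Ca" "\<forall>x\<in>set Ca. x < b"
    using Ca(1) ab by (auto simp: b_chain_iff intro: order_le_less_trans)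
  then have "b_chain b ?C" "chain_in ?C ?m"
    using append_top_chain Ca(2) by blast+
  moreover have "length ?C = \<phi> b"
    using Ca(3) max_b max_below_le[OF mono, of b] by (simp add: count_ascent_mset)
  moreover have "goes_through a b ?C"
    using Ca(1) ab by (auto simp: goes_through_def b_chain_iff less_imp_le)
  ultimately show ?thesis by (auto simp: longest_b_chain_iff len_m)
qed

text \<open>Raising \<open>\<phi>\<close> by one at \<open>a\<close> is the stability move with \<open>B\<close> the set of those \<open>b > a\<close>
  whose ascent starts at \<open>\<phi> a\<close>.\<close>

lemma P_stable_raise:
  fixes I :: "('p::{finite,order}, 'k::field) mpoly set"
  assumes stable: "P_stable I" and mono: "mono \<phi>" "mono (\<phi>(a := Suc (\<phi> a)))"
    and mI: "mon (ascent_mset \<phi>) \<in> I"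
  shows "mon (ascent_mset (\<phi>(a := Suc (\<phi> a)))) \<in> I"
proof -
  define m where "m = ascent_mset \<phi>"
  define B where "B = {b. a < b \<and> max_below \<phi> b = \<phi> a}"
  have "mset_set B \<subseteq># m"
    unfolding subseteq_mset_def
  proof
    fix x show "count (mset_set B) x \<le> count m x"
      using mono_raise_less[OF mono(2), of x]
      by (cases "x \<in> B") (auto simp: B_def m_def count_ascent_mset)
  qed
  then have m_split: "m = (m - mset_set B) + mset_set B" by simp
  have "antichain_set B" unfolding antichain_set_def
  proof (intro ballI impI)
    fix b1 b2 assume b: "b1 \<in> B" "b2 \<in> B" "b1 \<le> b2"
    show "b1 = b2"
    proof (rule ccontr)
      assume "b1 \<noteq> b2"
      with b have "\<phi> b1 \<le> max_below \<phi> b2" by (simp add: le_max_below)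
      with b mono_raise_less[OF mono(2), of b1] show False by (auto simp: B_def)
    qed
  qed
  moreover have "\<forall>b\<in>B. \<exists>C. longest_b_chain b m C \<and> goes_through a b C"
    using longest_b_chain_through[OF mono(1)] by (simp add: B_def m_def)
  ultimately have "mon (m - mset_set B + {#a#}) \<in> I"
    using stable mI m_split unfolding P_stable_def m_def by blast
  then show ?thesis by (simp add: ascent_mset_raise[OF mono] m_def B_def)
qed

lemma exists_maximal_point_below:
  fixes \<phi> \<psi> :: "'p::{finite,order} \<Rightarrow> nat"
  assumes "\<phi> \<le> \<psi>" "\<phi> \<noteq> \<psi>"
  shows "\<exists>c. \<phi> c < \<psi> c \<and> (\<forall>b. c < b \<longrightarrow> \<phi> b = \<psi> b)"
proof -
  have le: "\<And>p. \<phi> p \<le> \<psi> p" using assms(1) by (simp add: le_fun_def)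
  then have "{p. \<phi> p < \<psi> p} \<noteq> {}"
    using assms(2) by (auto simp: fun_eq_iff dest: le_neq_implies_less)
  then obtain c where c: "\<phi> c < \<psi> c" "\<And>b. \<phi> b < \<psi> b \<Longrightarrow> c \<le> b \<Longrightarrow> c = b"
    using finite_has_maximal[of "{p. \<phi> p < \<psi> p}"] by auto
  have "\<phi> b = \<psi> b" if "c < b" for b
    using c(2)[of b] le[of b] that by (auto simp: less_le)
  with c(1) show ?thesis by blast
qed

text \<open>Raising at a maximal point where \<open>\<phi>\<close> is still below \<open>\<psi>\<close> keeps \<open>\<phi>\<close> isotone and
  decreases the distance to \<open>\<psi>\<close>.\<close>

lemma mono_unit_raise_induct:
  fixes \<phi> \<psi> :: "'p::{finite,order} \<Rightarrow> nat"
  assumes "mono \<phi>" "mono \<psi>" "\<phi> \<le> \<psi>" "S \<phi>"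
    and raise: "\<And>\<phi> c. mono \<phi> \<Longrightarrow> mono (\<phi>(c := Suc (\<phi> c))) \<Longrightarrow> S \<phi> \<Longrightarrow> S (\<phi>(c := Suc (\<phi> c)))"
  shows "S \<psi>"
  using assms(1,3,4)
proof (induction "\<Sum>p\<in>UNIV. \<psi> p - \<phi> p" arbitrary: \<phi> rule: less_induct)
  case less
  show ?case
  proof (cases "\<phi> = \<psi>")
    case False
    then obtain c where c: "\<phi> c < \<psi> c" "\<forall>b. c < b \<longrightarrow> \<phi> b = \<psi> b"
      using exists_maximal_point_below[OF less.prems(2)] by blast
    define \<phi>' where "\<phi>' = \<phi>(c := Suc (\<phi> c))"
    have "mono \<phi>'"
    proof (rule monoI)
      fix x y :: 'p assume "x \<le> y"
      have "\<phi> x \<le> \<phi> y" "\<psi> x \<le> \<psi> y" using \<open>x \<le> y\<close> less.prems(1) assms(2) by (auto dest: monoD)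
      moreover have "x = c \<Longrightarrow> x \<noteq> y \<Longrightarrow> \<phi> y = \<psi> y" using c(2) \<open>x \<le> y\<close> by simp
      ultimately show "\<phi>' x \<le> \<phi>' y" using c(1) by (auto simp: \<phi>'_def)
    qed
    moreover have "\<phi>' \<le> \<psi>" using less.prems(2) c(1) by (auto simp: le_fun_def \<phi>'_def Suc_le_eq)
    moreover have "(\<Sum>p\<in>UNIV. \<psi> p - \<phi>' p) < (\<Sum>p\<in>UNIV. \<psi> p - \<phi> p)"
      using c(1) less.prems(2) by (intro sum_strict_mono_ex1) (auto simp: \<phi>'_def le_fun_def diff_le_mono2)
    ultimately show ?thesis
      using less.hyps less.prems raise unfolding \<phi>'_def by blast
  qed (use less.prems in simp)
qed

lemma P_stable_imp_chain_len_upclosed: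
  fixes I :: "('p::{finite,order}, 'k::field) mpoly set"
  assumes "P_stable I"
  shows "chain_len_upclosed I"
  unfolding chain_len_upclosed_def
proof (intro allI impI, elim conjE)
  fix m m' assume "mon m \<in> I" "longest_chain_len m \<le> longest_chain_len m'"
  then have "mon (ascent_mset (longest_chain_len m')) \<in> I"
    using mono_unit_raise_induct[where S = "\<lambda>\<phi>. mon (ascent_mset \<phi>) \<in> I",
        OF mono_longest_chain_len mono_longest_chain_len _ _ P_stable_raise[OF assms]]
    by (simp add: ascent_mset_longest_chain_len)
  then show "mon m' \<in> I" by (simp add: ascent_mset_longest_chain_len)
qed

theorem proposition3p11:
  fixes I :: "('p::{finite,order}, 'k::field) mpoly set"
  assumes "monomial_ideal I"
  shows "(\<exists>F. hom_filter F \<and> {f \<in> I. f \<in> range mon} = ascent_poly ` F) \<longleftrightarrow> P_stable I"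
  using ascent_filter_iff_chain_len_upclosed[of I] chain_len_upclosed_imp_P_stable[of I]
    P_stable_imp_chain_len_upclosed[of I] by blast

end
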